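(* Let $X$ be a random variable with distribution $P$ on $\mathbb{Z}_+$ and mean $\lambda>0$, and suppose that either $P(k)>0$ for all $k\in\mathbb{Z}_+$, or there is $N$ with $P(k)=0$ for all $k>N$. Then $$\|P-\mathrm{Po}(\lambda)\|_{\mathrm{TV}}\le\sqrt{2K(X)}.$$
   Context: $\|P-Q\|_{\mathrm{TV}}=\sum_{x}|P(x)-Q(x)|$. For $X$ with distribution $P$ on $\mathbb{Z}_+$ and mean $\lambda>0$, the scaled Fisher information is $K(X)=\lambda\sum_{x\ge0}\frac{\big(\frac{(x+1)P(x+1)}{\lambda}-P(x)\big)^2}{P(x)}$ (equivalently $\lambda E[\rho_X(X)^2]$ with $\rho_X(x)=\frac{(x+1)P(x+1)}{\lambda P(x)}-1$), with conventions $0/0=0$, $c/0=\infty$ for $c>0$. $\mathrm{Po}(\lambda)$ is the Poisson distribution with mean $\lambda$. *)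

theory Defs
  imports "HOL-Analysis.Analysis"
begin

text \<open>A distribution on Z_+ is a function P :: nat => real, nonnegative, summing to 1.\<close>

definition poisson :: "real \<Rightarrow> nat \<Rightarrow> real" where
  "poisson lam k = exp (- lam) * lam ^ k / fact k"

text \<open>Total variation distance as in the paper (no factor 1/2).\<close>
definition tv_dist :: "(nat \<Rightarrow> real) \<Rightarrow> (nat \<Rightarrow> real) \<Rightarrow> real" where
  "tv_dist P Q = (\<Sum>x. \<bar>P x - Q x\<bar>)"

definition sfi_term :: "(nat \<Rightarrow> real) \<Rightarrow> real \<Rightarrow> nat \<Rightarrow> ennreal" where
  "sfi_term P lam x =
     (let d = real (x + 1) * P (x + 1) / lam - P x in
      if P x = 0 then (if d = 0 then 0 else \<infinity>) else ennreal (d\<^sup>2 / P x))"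

definition scaled_fisher :: "(nat \<Rightarrow> real) \<Rightarrow> real \<Rightarrow> ennreal" where
  "scaled_fisher P lam = ennreal lam * (\<Sum>x. sfi_term P lam x)"

definition ennsqrt :: "ennreal \<Rightarrow> ennreal" where
  "ennsqrt a = (if a = \<infinity> then \<infinity> else ennreal (sqrt (enn2real a)))"

end

theory Submission
  imports Defs
begin

text \<open>
  Stein's method.  Let Q = Po(lam), h the sign of P - Q and H n the partial sums of
  Q k (h k - E_Q h).  Summation by parts against H, using (k + 1) Q (k + 1) = lam Q k, gives
  \<Sum>k\<le>n. |P k - Q k| = (terms vanishing as n \<rightarrow> \<infinity>) - \<Sum>k<n. (H k / Q k) d k,
  where d k = (k + 1) P (k + 1) / lam - P k is the defect of P from the Poisson recursion.
  The sharp estimate F (1 - F) \<le> sqrt (lam / 2) Q for the Poisson distribution function F gives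
  |H k / Q k| \<le> sqrt (2 lam), and Cauchy-Schwarz with weights P bounds the remaining sum by
  sqrt (2 lam \<Sum>k. (d k)^2 / P k) = sqrt (2 K).
\<close>

lemma poisson_pos: "lam > 0 \<Longrightarrow> poisson lam k > 0"
  by (simp add: poisson_def)

lemma poisson_Suc: "poisson lam (Suc k) = lam * poisson lam k / (real k + 1)"
  by (simp add: poisson_def field_simps)

lemma poisson_sums: "poisson lam sums 1"
proof -
  have "(\<lambda>n. exp (-lam) * (lam ^ n /\<^sub>R fact n)) sums (exp (-lam) * exp lam)"
    by (rule sums_mult[OF exp_converges])
  moreover have "poisson lam = (\<lambda>n. exp (-lam) * (lam ^ n /\<^sub>R fact n))"
    by (auto simp: poisson_def fun_eq_iff field_simps)
  ultimately show ?thesis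
    by (simp add: exp_minus)
qed

definition poisson_cdf :: "real \<Rightarrow> nat \<Rightarrow> real" where
  "poisson_cdf lam n = (\<Sum>k\<le>n. poisson lam k)"

lemma poisson_cdf_Suc: "poisson_cdf lam (Suc n) = poisson_cdf lam n + poisson lam (Suc n)"
  by (simp add: poisson_cdf_def)

lemma poisson_cdf_LIMSEQ: "poisson_cdf lam \<longlonglongrightarrow> 1"
  using poisson_sums[of lam] unfolding sums_def_le poisson_cdf_def .

lemma poisson_cdf_nonneg: "lam > 0 \<Longrightarrow> poisson_cdf lam n \<ge> 0"
  unfolding poisson_cdf_def by (intro sum_nonneg) (auto intro: less_imp_le poisson_pos)

lemma poisson_cdf_mono: "lam > 0 \<Longrightarrow> m \<le> n \<Longrightarrow> poisson_cdf lam m \<le> poisson_cdf lam n"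
  unfolding poisson_cdf_def by (intro sum_mono2) (auto intro: less_imp_le poisson_pos)

lemma poisson_cdf_le_1: "lam > 0 \<Longrightarrow> poisson_cdf lam n \<le> 1"
  using LIMSEQ_le_const[OF poisson_cdf_LIMSEQ, of "poisson_cdf lam n"] poisson_cdf_mono[of lam n]
  by blast

lemma half_shift_weight_le:
  fixes w X q L M :: real
  assumes "X \<ge> 0" "q > 0" "M \<ge> 0"
    and IH: "(w + 1 / 2) * X \<le> L * q"
    and weights: "w * L + w * (w + 1 / 2) \<le> M * (w + 1 / 2)"
  shows "w * (X + q) \<le> M * q"
proof (cases "w \<le> 0")
  case True
  then show ?thesis
    using assms(1-3) by (smt (verit) mult_nonpos_nonneg mult_nonneg_nonneg)
next
  case False
  have "(w + 1 / 2) * (w * (X + q)) = w * ((w + 1 / 2) * X) + w * (w + 1 / 2) * q"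
    by (simp add: algebra_simps)
  also have "\<dots> \<le> w * (L * q) + w * (w + 1 / 2) * q"
    using IH False by (intro add_right_mono mult_left_mono) auto
  also have "\<dots> = q * (w * L + w * (w + 1 / 2))"
    by (simp add: algebra_simps)
  also have "\<dots> \<le> (w + 1 / 2) * (M * q)"
    using mult_left_mono[OF weights, of q] \<open>q > 0\<close> by (simp add: algebra_simps)
  finally show ?thesis
    using False by simp
qed

text \<open>
  The linear weights in the following bounds on F = poisson_cdf lam and on 1 - F are chosen so
  that each induction step reduces to the nonnegativity of a square, and so that the weights of
  F and of 1 - F add up to 2 sqrt (lam / 2).
\<close>

lemma poisson_cdf_weighted_le:
  assumes lam: "lam > 0"
  shows "(sqrt (lam / 2) - real n / 2 - 1 / 4 + lam / 2) * poisson_cdf lam n \<le> lam * poisson lam n"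
proof (induction n)
  case 0
  define s where "s = sqrt (lam / 2)"
  have "lam = 2 * s\<^sup>2"
    using lam by (simp add: s_def)
  then have "s - 1 / 4 + lam / 2 \<le> lam"
    using zero_le_power2[of "s - 1 / 2"] by (simp add: power2_eq_square algebra_simps)
  then show ?case
    using poisson_pos[OF lam, of 0] by (simp add: poisson_cdf_def s_def)
next
  case (Suc n)
  define s where "s = sqrt (lam / 2)"
  define b where "b = s - real (Suc n) / 2 - 1 / 4 + lam / 2"
  have lam_eq: "lam = 2 * s\<^sup>2"
    using lam by (simp add: s_def)
  have "b + 1 / 2 = s - real n / 2 - 1 / 4 + lam / 2"
    by (simp add: b_def field_simps)
  moreover have "lam * poisson lam n = (real n + 1) * poisson lam (Suc n)"
    using lam by (simp add: poisson_Suc)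
  ultimately have IH: "(b + 1 / 2) * poisson_cdf lam n \<le> (real n + 1) * poisson lam (Suc n)"
    using Suc.IH by (simp add: s_def)
  have n_eq: "real n + 1 = 2 * s - 2 * b + 2 * s\<^sup>2 - 1 / 2"
    using lam_eq by (simp add: b_def algebra_simps)
  have "lam * (b + 1 / 2) - (b * (real n + 1) + b * (b + 1 / 2)) = (b - s)\<^sup>2"
    unfolding n_eq lam_eq by (simp add: power2_eq_square algebra_simps)
  then have "b * (real n + 1) + b * (b + 1 / 2) \<le> lam * (b + 1 / 2)"
    by (smt (verit) zero_le_power2)
  then have "b * (poisson_cdf lam n + poisson lam (Suc n)) \<le> lam * poisson lam (Suc n)"
    using lam poisson_pos[OF lam] poisson_cdf_nonneg[OF lam] IH by (intro half_shift_weight_le) auto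
  then show ?case
    by (simp add: b_def s_def poisson_cdf_Suc)
qed

lemma poisson_cdf_diff_weighted_le:
  assumes lam: "lam > 0" and "n \<le> N"
  shows "(sqrt (lam / 2) + real n / 2 + 1 / 4 - lam / 2) * (poisson_cdf lam N - poisson_cdf lam n)
           \<le> lam * poisson lam n"
  using \<open>n \<le> N\<close>
proof (induction n rule: inc_induct)
  case base
  then show ?case
    using poisson_pos[OF lam, of N] lam by simp
next
  case (step n)
  define s where "s = sqrt (lam / 2)"
  define a where "a = s + real n / 2 + 1 / 4 - lam / 2"
  define R where "R = poisson_cdf lam N - poisson_cdf lam (Suc n)"
  have lam_eq: "lam = 2 * s\<^sup>2"
    using lam by (simp add: s_def)
  have "a + 1 / 2 = s + real (Suc n) / 2 + 1 / 4 - lam / 2"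
    by (simp add: a_def field_simps)
  then have IH: "(a + 1 / 2) * R \<le> lam * poisson lam (Suc n)"
    using step.IH by (simp add: s_def R_def)
  have n_eq: "real n + 1 = 2 * a - 2 * s + 2 * s\<^sup>2 + 1 / 2"
    using lam_eq by (simp add: a_def algebra_simps)
  have "(real n + 1) * (a + 1 / 2) - (a * lam + a * (a + 1 / 2)) = (a - s + 1 / 2)\<^sup>2"
    unfolding n_eq lam_eq by (simp add: power2_eq_square algebra_simps)
  then have "a * lam + a * (a + 1 / 2) \<le> (real n + 1) * (a + 1 / 2)"
    by (smt (verit) zero_le_power2)
  then have "a * (R + poisson lam (Suc n)) \<le> (real n + 1) * poisson lam (Suc n)"
    using poisson_pos[OF lam] poisson_cdf_mono[OF lam, of "Suc n" N] step.hyps IH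
    by (intro half_shift_weight_le) (auto simp: R_def)
  moreover have "lam * poisson lam n = (real n + 1) * poisson lam (Suc n)"
    using lam by (simp add: poisson_Suc)
  ultimately show ?case
    by (simp add: a_def s_def R_def poisson_cdf_Suc)
qed

lemma poisson_tail_weighted_le:
  assumes lam: "lam > 0"
  shows "(sqrt (lam / 2) + real n / 2 + 1 / 4 - lam / 2) * (1 - poisson_cdf lam n) \<le> lam * poisson lam n"
proof (rule LIMSEQ_le_const2)
  show "(\<lambda>N. (sqrt (lam / 2) + real n / 2 + 1 / 4 - lam / 2) * (poisson_cdf lam N - poisson_cdf lam n))
          \<longlonglongrightarrow> (sqrt (lam / 2) + real n / 2 + 1 / 4 - lam / 2) * (1 - poisson_cdf lam n)"
    by (intro tendsto_intros poisson_cdf_LIMSEQ)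
qed (use poisson_cdf_diff_weighted_le[OF lam] in blast)

lemma poisson_cdf_times_tail_le:
  assumes lam: "lam > 0"
  shows "poisson_cdf lam n * (1 - poisson_cdf lam n) \<le> sqrt (lam / 2) * poisson lam n"
proof -
  define s where "s = sqrt (lam / 2)"
  define F where "F = poisson_cdf lam n"
  define q where "q = poisson lam n"
  have F_nonneg: "F \<ge> 0" and F_le_1: "F \<le> 1"
    using poisson_cdf_nonneg[OF lam] poisson_cdf_le_1[OF lam] by (simp_all add: F_def)
  have "(s - real n / 2 - 1 / 4 + lam / 2) * F * (1 - F) + (s + real n / 2 + 1 / 4 - lam / 2) * (1 - F) * F
          \<le> lam * q * (1 - F) + lam * q * F"
    using poisson_cdf_weighted_le[OF lam, of n] poisson_tail_weighted_le[OF lam, of n] F_nonneg F_le_1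
    by (intro add_mono mult_right_mono) (simp_all add: s_def F_def q_def)
  then have "2 * s * (F * (1 - F)) \<le> 2 * s * (s * q)"
    using lam by (simp add: s_def algebra_simps)
  moreover have "s > 0"
    using lam by (simp add: s_def)
  ultimately show ?thesis
    by (simp add: s_def F_def q_def)
qed

lemma abs_suminf_minus_sum_le:
  fixes a b :: "nat \<Rightarrow> real"
  assumes a: "summable a" and b_le: "\<And>k. \<bar>b k\<bar> \<le> a k"
  shows "\<bar>suminf b - (\<Sum>k<n. b k)\<bar> \<le> suminf a - (\<Sum>k<n. a k)"
proof -
  have b: "summable b"
    using b_le by (intro summable_comparison_test'[OF a]) simp
  have abs_b: "summable (\<lambda>k. \<bar>b (k + n)\<bar>)"
    using b_le by (intro summable_comparison_test'[OF summable_ignore_initial_segment[OF a]]) simp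
  have "\<bar>suminf b - (\<Sum>k<n. b k)\<bar> = \<bar>\<Sum>k. b (k + n)\<bar>"
    by (simp add: suminf_minus_initial_segment[OF b])
  also have "\<dots> \<le> (\<Sum>k. \<bar>b (k + n)\<bar>)"
    by (rule summable_rabs[OF abs_b])
  also have "\<dots> \<le> (\<Sum>k. a (k + n))"
    using b_le abs_b summable_ignore_initial_segment[OF a] by (intro suminf_le) auto
  also have "\<dots> = suminf a - (\<Sum>k<n. a k)"
    by (rule suminf_minus_initial_segment[OF a])
  finally show ?thesis .
qed

lemma weighted_Cauchy_Schwarz:
  fixes g d P :: "nat \<Rightarrow> real"
  assumes nonneg: "\<And>k. k \<in> A \<Longrightarrow> P k \<ge> 0"
    and zero: "\<And>k. k \<in> A \<Longrightarrow> P k = 0 \<Longrightarrow> d k = 0"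
  shows "\<bar>\<Sum>k\<in>A. g k * d k\<bar> \<le> sqrt ((\<Sum>k\<in>A. (g k)\<^sup>2 * P k) * (\<Sum>k\<in>A. (d k)\<^sup>2 / P k))"
proof -
  define u where "u k = g k * sqrt (P k)" for k
  define v where "v k = d k / sqrt (P k)" for k
  have "g k * d k = u k * v k" if "k \<in> A" for k
    using nonneg[OF that] zero[OF that] by (cases "P k = 0") (simp_all add: u_def v_def)
  then have "(\<Sum>k\<in>A. g k * d k)\<^sup>2 = (\<Sum>k\<in>A. u k * v k)\<^sup>2"
    by (simp cong: sum.cong)
  also have "\<dots> \<le> (\<Sum>k\<in>A. (u k)\<^sup>2) * (\<Sum>k\<in>A. (v k)\<^sup>2)"
    by (rule Cauchy_Schwarz_ineq_sum)
  also have "\<dots> = (\<Sum>k\<in>A. (g k)\<^sup>2 * P k) * (\<Sum>k\<in>A. (d k)\<^sup>2 / P k)"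
    using nonneg by (simp add: u_def v_def power_mult_distrib power_divide cong: sum.cong)
  finally show ?thesis
    by (metis real_sqrt_abs real_sqrt_le_mono)
qed

definition poisson_expectation :: "real \<Rightarrow> (nat \<Rightarrow> real) \<Rightarrow> real" where
  "poisson_expectation lam h = (\<Sum>k. poisson lam k * h k)"

text \<open>
  stein_partial lam h n / poisson lam n = lam f (n + 1), where f solves the Poisson Stein equation
  lam f (k + 1) - k f k = h k - E h.
\<close>

definition stein_partial :: "real \<Rightarrow> (nat \<Rightarrow> real) \<Rightarrow> nat \<Rightarrow> real" where
  "stein_partial lam h n = (\<Sum>k\<le>n. poisson lam k * (h k - poisson_expectation lam h))"

lemma summable_poisson_mult_bounded:
  assumes lam: "lam > 0" and h: "\<And>k. \<bar>h k\<bar> \<le> 1"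
  shows "summable (\<lambda>k. poisson lam k * h k)"
proof (rule summable_comparison_test')
  show "summable (poisson lam)"
    using poisson_sums by (rule sums_summable)
  show "norm (poisson lam k * h k) \<le> poisson lam k" for k
    using poisson_pos[OF lam, of k] h[of k] by (simp add: abs_mult mult_left_le)
qed

lemma stein_partial_eq:
  "stein_partial lam h n = (\<Sum>k\<le>n. poisson lam k * h k) - poisson_expectation lam h * poisson_cdf lam n"
  by (simp add: stein_partial_def poisson_cdf_def algebra_simps sum_subtractf sum_distrib_left)

lemma stein_partial_LIMSEQ:
  assumes lam: "lam > 0" and h: "\<And>k. \<bar>h k\<bar> \<le> 1"
  shows "stein_partial lam h \<longlonglongrightarrow> 0"
proof -
  have "(\<lambda>n. \<Sum>k\<le>n. poisson lam k * h k) \<longlonglongrightarrow> poisson_expectation lam h"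
    using summable_poisson_mult_bounded[OF lam h]
    by (simp add: poisson_expectation_def summable_sums sums_def_le[symmetric])
  then have "(\<lambda>n. (\<Sum>k\<le>n. poisson lam k * h k) - poisson_expectation lam h * poisson_cdf lam n)
               \<longlonglongrightarrow> poisson_expectation lam h - poisson_expectation lam h * 1"
    by (intro tendsto_intros poisson_cdf_LIMSEQ)
  moreover have "stein_partial lam h
                   = (\<lambda>n. (\<Sum>k\<le>n. poisson lam k * h k) - poisson_expectation lam h * poisson_cdf lam n)"
    by (simp add: fun_eq_iff stein_partial_eq)
  ultimately show ?thesis
    by simp
qed

lemma abs_stein_partial_le:
  assumes lam: "lam > 0" and h: "\<And>k. \<bar>h k\<bar> \<le> 1"
  shows "\<bar>stein_partial lam h n\<bar> \<le> 2 * poisson_cdf lam n * (1 - poisson_cdf lam n)"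
proof -
  define S where "S = (\<Sum>k\<le>n. poisson lam k * h k)"
  define c where "c = poisson_expectation lam h"
  define F where "F = poisson_cdf lam n"
  have F_nonneg: "F \<ge> 0" and F_le_1: "F \<le> 1"
    using poisson_cdf_nonneg[OF lam] poisson_cdf_le_1[OF lam] by (simp_all add: F_def)
  have term_le: "\<bar>poisson lam k * h k\<bar> \<le> poisson lam k" for k
    using poisson_pos[OF lam, of k] h[of k] by (simp add: abs_mult mult_left_le)
  have "\<bar>S\<bar> \<le> (\<Sum>k\<le>n. \<bar>poisson lam k * h k\<bar>)"
    unfolding S_def by (rule sum_abs)
  also have "\<dots> \<le> F"
    unfolding F_def poisson_cdf_def by (intro sum_mono term_le)
  finally have S_le: "\<bar>S\<bar> \<le> F" .
  have tail_le: "\<bar>c - S\<bar> \<le> 1 - F"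
    using abs_suminf_minus_sum_le[of "poisson lam" "\<lambda>k. poisson lam k * h k" "Suc n"]
      poisson_sums[of lam] term_le
    by (simp add: c_def S_def F_def poisson_expectation_def poisson_cdf_def sums_iff lessThan_Suc_atMost)
  have "stein_partial lam h n = S * (1 - F) - (c - S) * F"
    by (simp add: stein_partial_eq S_def c_def F_def algebra_simps)
  then have "\<bar>stein_partial lam h n\<bar> \<le> \<bar>S\<bar> * (1 - F) + \<bar>c - S\<bar> * F"
    using abs_triangle_ineq4[of "S * (1 - F)" "(c - S) * F"] F_nonneg F_le_1 by (simp add: abs_mult)
  also have "\<dots> \<le> F * (1 - F) + (1 - F) * F"
    using S_le tail_le F_nonneg F_le_1 by (intro add_mono mult_right_mono) auto
  finally show ?thesis
    by (simp add: F_def)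
qed

lemma abs_stein_partial_le_poisson:
  assumes lam: "lam > 0" and h: "\<And>k. \<bar>h k\<bar> \<le> 1"
  shows "\<bar>stein_partial lam h n\<bar> \<le> sqrt (2 * lam) * poisson lam n"
proof -
  have "sqrt (2 * lam) = sqrt (4 * (lam / 2))"
    by simp
  also have "\<dots> = 2 * sqrt (lam / 2)"
    by (simp only: real_sqrt_mult real_sqrt_four)
  finally have sqrt_eq: "sqrt (2 * lam) = 2 * sqrt (lam / 2)" .
  show ?thesis
    using abs_stein_partial_le[of lam h n, OF lam h] poisson_cdf_times_tail_le[OF lam, of n]
    by (simp add: sqrt_eq)
qed

text \<open>In the notation of the paper, poisson_defect P lam k = P k * \<rho>_X k.\<close>

definition poisson_defect :: "(nat \<Rightarrow> real) \<Rightarrow> real \<Rightarrow> nat \<Rightarrow> real" where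
  "poisson_defect P lam k = real (k + 1) * P (k + 1) / lam - P k"

lemma poisson_summation_by_parts:
  fixes P e :: "nat \<Rightarrow> real"
  assumes lam: "lam > 0"
  defines "G \<equiv> \<lambda>n. \<Sum>j\<le>n. poisson lam j * e j"
  shows "(\<Sum>k\<le>n. (P k - poisson lam k) * e k)
           = (P n / poisson lam n - 1) * G n - (\<Sum>k<n. G k / poisson lam k * poisson_defect P lam k)"
proof (induction n)
  case 0
  show ?case
    using poisson_pos[OF lam, of 0] by (simp add: G_def field_simps)
next
  case (Suc n)
  have step_identity:
    "(p' / (lam * q / m) - 1) * (g + lam * q / m * x) - g / q * (m * p' / lam - p)
       = (p / q - 1) * g + (p' - lam * q / m) * x"
    if "q > 0" "m > 0" for g x q m p p' :: real
    using that lam by (simp add: field_simps)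
  have "G (Suc n) = G n + poisson lam (Suc n) * e (Suc n)"
    by (simp add: G_def)
  then have "(P (Suc n) / poisson lam (Suc n) - 1) * G (Suc n) - G n / poisson lam n * poisson_defect P lam n
               = (P n / poisson lam n - 1) * G n + (P (Suc n) - poisson lam (Suc n)) * e (Suc n)"
    using step_identity[OF poisson_pos[OF lam, of n], of "real n + 1"]
    by (simp add: poisson_Suc poisson_defect_def add.commute)
  then show ?case
    using Suc.IH by simp
qed


lemma abs_sum_stein_defect_le:
  fixes P h :: "nat \<Rightarrow> real"
  assumes nonneg: "\<And>k. P k \<ge> 0" and prob: "P sums 1" and lam: "lam > 0" and h: "\<And>k. \<bar>h k\<bar> \<le> 1"
    and defect_0: "\<And>k. P k = 0 \<Longrightarrow> poisson_defect P lam k = 0"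
    and fisher: "(\<lambda>k. (poisson_defect P lam k)\<^sup>2 / P k) sums D"
  shows "\<bar>\<Sum>k<n. stein_partial lam h k / poisson lam k * poisson_defect P lam k\<bar> \<le> sqrt (2 * lam * D)"
proof -
  define g where "g k = stein_partial lam h k / poisson lam k" for k
  define d where "d = poisson_defect P lam"
  have g_square_le: "(g k)\<^sup>2 \<le> 2 * lam" for k
  proof -
    have "\<bar>g k\<bar> \<le> sqrt (2 * lam)"
      using abs_stein_partial_le_poisson[of lam h k, OF lam h] poisson_pos[OF lam, of k]
      by (simp add: g_def abs_divide divide_le_eq)
    then show ?thesis
      using power_mono[of "\<bar>g k\<bar>" "sqrt (2 * lam)" 2] lam by simp
  qed
  have "\<bar>\<Sum>k<n. g k * d k\<bar> \<le> sqrt ((\<Sum>k<n. (g k)\<^sup>2 * P k) * (\<Sum>k<n. (d k)\<^sup>2 / P k))"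
    using nonneg defect_0 by (intro weighted_Cauchy_Schwarz) (auto simp: d_def)
  also have "\<dots> \<le> sqrt ((2 * lam) * D)"
  proof (intro real_sqrt_le_mono mult_mono)
    have "(\<Sum>k<n. (g k)\<^sup>2 * P k) \<le> (\<Sum>k<n. 2 * lam * P k)"
      using g_square_le nonneg by (intro sum_mono mult_right_mono) auto
    also have "\<dots> \<le> 2 * lam"
      using sum_le_suminf[of P "{..<n}"] prob nonneg lam
      by (simp add: sums_iff flip: sum_distrib_left)
    finally show "(\<Sum>k<n. (g k)\<^sup>2 * P k) \<le> 2 * lam" .
    show "(\<Sum>k<n. (d k)\<^sup>2 / P k) \<le> D"
      using sum_le_suminf[of "\<lambda>k. (d k)\<^sup>2 / P k" "{..<n}"] fisher nonneg
      by (simp add: d_def sums_iff)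
  qed (use lam nonneg in \<open>auto intro: sum_nonneg\<close>)
  finally show ?thesis
    by (simp add: g_def d_def)
qed

lemma sum_diff_poisson_mult_le:
  fixes P h :: "nat \<Rightarrow> real"
  assumes nonneg: "\<And>k. P k \<ge> 0" and prob: "P sums 1" and lam: "lam > 0" and h: "\<And>k. \<bar>h k\<bar> \<le> 1"
    and defect_0: "\<And>k. P k = 0 \<Longrightarrow> poisson_defect P lam k = 0"
    and fisher: "(\<lambda>k. (poisson_defect P lam k)\<^sup>2 / P k) sums D"
  shows "(\<Sum>k\<le>n. (P k - poisson lam k) * h k)
           \<le> \<bar>poisson_expectation lam h\<bar> * \<bar>\<Sum>k\<le>n. P k - poisson lam k\<bar> + sqrt (2 * lam) * P n
             + \<bar>stein_partial lam h n\<bar> + sqrt (2 * lam * D)"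
proof -
  define Q where "Q = poisson lam"
  define c where "c = poisson_expectation lam h"
  define H where "H = stein_partial lam h"
  define S where "S = (\<Sum>k<n. H k / Q k * poisson_defect P lam k)"
  have Q_pos: "Q n > 0"
    using poisson_pos[OF lam] by (simp add: Q_def)
  have "(\<Sum>k\<le>n. (P k - Q k) * h k) = (\<Sum>k\<le>n. (P k - Q k) * (h k - c)) + c * (\<Sum>k\<le>n. P k - Q k)"
    by (simp add: sum_distrib_left sum.distrib[symmetric] algebra_simps)
  also have "\<dots> = P n * (H n / Q n) - H n - S + c * (\<Sum>k\<le>n. P k - Q k)"
    using poisson_summation_by_parts[OF lam, of P "\<lambda>k. h k - c" n] Q_pos
    by (simp add: H_def S_def stein_partial_def c_def Q_def field_simps)
  also have "\<dots> \<le> sqrt (2 * lam) * P n + \<bar>H n\<bar> + sqrt (2 * lam * D) + \<bar>c\<bar> * \<bar>\<Sum>k\<le>n. P k - Q k\<bar>"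
  proof -
    have "P n * (H n / Q n) \<le> P n * sqrt (2 * lam)"
      using abs_stein_partial_le_poisson[of lam h n, OF lam h] Q_pos nonneg[of n]
      by (intro mult_left_mono) (auto simp: H_def Q_def divide_le_eq)
    moreover have "c * (\<Sum>k\<le>n. P k - Q k) \<le> \<bar>c\<bar> * \<bar>\<Sum>k\<le>n. P k - Q k\<bar>"
      by (metis abs_ge_self abs_mult)
    moreover have "\<bar>S\<bar> \<le> sqrt (2 * lam * D)"
      unfolding S_def H_def Q_def by (rule abs_sum_stein_defect_le[OF nonneg prob lam h defect_0 fisher])
    ultimately show ?thesis
      using mult.commute[of "P n" "sqrt (2 * lam)"] abs_ge_minus_self[of "H n"] abs_ge_minus_self[of S]
      by linarith
  qed
  finally show ?thesis
    by (simp add: Q_def c_def H_def algebra_simps)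
qed

lemma tv_dist_poisson_le:
  fixes P :: "nat \<Rightarrow> real"
  assumes nonneg: "\<And>k. P k \<ge> 0" and prob: "P sums 1" and lam: "lam > 0"
    and defect_0: "\<And>k. P k = 0 \<Longrightarrow> poisson_defect P lam k = 0"
    and fisher: "(\<lambda>k. (poisson_defect P lam k)\<^sup>2 / P k) sums D"
  shows "tv_dist P (poisson lam) \<le> sqrt (2 * lam * D)"
proof -
  define Q where "Q = poisson lam"
  define h where "h k = (if Q k \<le> P k then 1 else -1 :: real)" for k
  define c where "c = poisson_expectation lam h"
  define H where "H = stein_partial lam h"
  have h_bound: "\<bar>h k\<bar> \<le> 1" for k
    by (simp add: h_def)
  have "\<bar>P k - Q k\<bar> = (P k - Q k) * h k" for k
    by (simp add: h_def)
  then have partial_bound: "(\<Sum>k\<le>n. \<bar>P k - Q k\<bar>)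
      \<le> \<bar>c\<bar> * \<bar>\<Sum>k\<le>n. P k - Q k\<bar> + sqrt (2 * lam) * P n + \<bar>H n\<bar> + sqrt (2 * lam * D)" for n
    using sum_diff_poisson_mult_le[where h = h and n = n, OF nonneg prob lam h_bound defect_0 fisher]
    by (simp add: Q_def c_def H_def)
  have "summable (\<lambda>k. \<bar>P k - Q k\<bar>)"
  proof (rule summable_comparison_test')
    show "summable (\<lambda>k. P k + Q k)"
      using prob poisson_sums[of lam] by (intro summable_add) (auto simp: Q_def sums_iff)
    show "norm \<bar>P k - Q k\<bar> \<le> P k + Q k" for k
      using nonneg[of k] poisson_pos[OF lam, of k] by (simp add: Q_def)
  qed
  then have "(\<lambda>n. \<Sum>k\<le>n. \<bar>P k - Q k\<bar>) \<longlonglongrightarrow> tv_dist P (poisson lam)"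
    by (simp add: tv_dist_def Q_def summable_sums sums_def_le[symmetric])
  moreover have "(\<lambda>n. \<bar>c\<bar> * \<bar>\<Sum>k\<le>n. P k - Q k\<bar> + sqrt (2 * lam) * P n + \<bar>H n\<bar> + sqrt (2 * lam * D))
                   \<longlonglongrightarrow> \<bar>c\<bar> * \<bar>1 - 1\<bar> + sqrt (2 * lam) * 0 + \<bar>0\<bar> + sqrt (2 * lam * D)"
  proof (intro tendsto_intros)
    show "(\<lambda>n. \<Sum>k\<le>n. P k - Q k) \<longlonglongrightarrow> 1 - 1"
      using sums_diff[OF prob poisson_sums] by (simp add: Q_def sums_def_le)
    show "P \<longlonglongrightarrow> 0"
      using prob by (intro summable_LIMSEQ_zero) (simp add: sums_iff)
    show "H \<longlonglongrightarrow> 0"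
      unfolding H_def using lam h_bound by (rule stein_partial_LIMSEQ)
  qed
  ultimately show ?thesis
    using partial_bound by (intro LIMSEQ_le) auto
qed

lemma poisson_defect_eq_0_if_sfi_term_finite:
  "sfi_term P lam k \<noteq> \<infinity> \<Longrightarrow> P k = 0 \<Longrightarrow> poisson_defect P lam k = 0"
  by (auto simp: sfi_term_def poisson_defect_def Let_def split: if_splits)

lemma sfi_term_eq_ennreal:
  "sfi_term P lam k \<noteq> \<infinity> \<Longrightarrow> sfi_term P lam k = ennreal ((poisson_defect P lam k)\<^sup>2 / P k)"
  by (auto simp: sfi_term_def poisson_defect_def Let_def split: if_splits)

lemma scaled_fisher_finite:
  fixes P :: "nat \<Rightarrow> real"
  assumes nonneg: "\<And>k. P k \<ge> 0" and lam: "lam > 0" and finite: "(\<Sum>k. sfi_term P lam k) \<noteq> \<infinity>"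
  obtains D where "\<And>k. P k = 0 \<Longrightarrow> poisson_defect P lam k = 0"
    and "(\<lambda>k. (poisson_defect P lam k)\<^sup>2 / P k) sums D"
    and "D \<ge> 0" and "scaled_fisher P lam = ennreal (lam * D)"
proof -
  define t where "t k = (poisson_defect P lam k)\<^sup>2 / P k" for k
  have t_nonneg: "t k \<ge> 0" for k
    using nonneg[of k] by (simp add: t_def)
  have term_finite: "sfi_term P lam k \<noteq> \<infinity>" for k
    using ennreal_suminf_lessD[of "sfi_term P lam" \<infinity> k] finite by (simp add: top.not_eq_extremum)
  then have sfi_eq: "sfi_term P lam = (\<lambda>k. ennreal (t k))"
    by (simp add: fun_eq_iff t_def sfi_term_eq_ennreal)
  then have "summable t"
    using finite t_nonneg by (intro summable_suminf_not_top) auto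
  show ?thesis
  proof (rule that)
    show "P k = 0 \<Longrightarrow> poisson_defect P lam k = 0" for k
      by (rule poisson_defect_eq_0_if_sfi_term_finite[OF term_finite])
    show "(\<lambda>k. (poisson_defect P lam k)\<^sup>2 / P k) sums suminf t"
      using summable_sums[OF \<open>summable t\<close>] by (simp add: t_def[abs_def])
    show "suminf t \<ge> 0"
      using t_nonneg \<open>summable t\<close> by (rule suminf_nonneg[rotated])
    then show "scaled_fisher P lam = ennreal (lam * suminf t)"
      using \<open>summable t\<close> lam by (simp add: scaled_fisher_def sfi_eq suminf_ennreal2 t_nonneg ennreal_mult)
  qed
qed

theorem mainTheorem4:
  fixes P :: "nat \<Rightarrow> real" and lam :: real
  assumes nonneg: "\<And>k. P k \<ge> 0"
    and prob: "P sums 1"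
    and mean: "(\<lambda>k. real k * P k) sums lam"
    and lam_pos: "lam > 0"
    and supp: "(\<forall>k. P k > 0) \<or> (\<exists>N. \<forall>k>N. P k = 0)"
  shows "ennreal (tv_dist P (poisson lam)) \<le> ennsqrt (2 * scaled_fisher P lam)"
proof (cases "(\<Sum>k. sfi_term P lam k) = \<infinity>")
  case True
  then have "scaled_fisher P lam = \<infinity>"
    using lam_pos by (simp add: scaled_fisher_def ennreal_mult_top)
  then show ?thesis
    by (simp add: ennsqrt_def ennreal_mult_top)
next
  case False
  then obtain D where defect_0: "\<And>k. P k = 0 \<Longrightarrow> poisson_defect P lam k = 0"
    and fisher: "(\<lambda>k. (poisson_defect P lam k)\<^sup>2 / P k) sums D"
    and "D \<ge> 0" and K: "scaled_fisher P lam = ennreal (lam * D)"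
    using scaled_fisher_finite[of P lam, OF nonneg lam_pos] by blast
  have "tv_dist P (poisson lam) \<le> sqrt (2 * lam * D)"
    using tv_dist_poisson_le[OF nonneg prob lam_pos defect_0 fisher] .
  moreover have "2 * scaled_fisher P lam = ennreal (2 * lam * D)"
    using K lam_pos \<open>D \<ge> 0\<close> by (simp add: ennreal_mult mult.assoc)
  ultimately show ?thesis
    using lam_pos \<open>D \<ge> 0\<close> by (simp add: ennsqrt_def ennreal_leI)
qed

end
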